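(* Let $T(z)=\dfrac{az+b}{cz+d}$ with $a,c\in\mathbb{C}\setminus\{0\}$, $b,d\in\mathbb{C}$ and $ad-bc=1$. Then $z=-b/a$ is a superattracting fixed point of $St_T$, the finite extraneous fixed points $z_e=\dfrac{(a-2d)\pm\sqrt{a^2-4}}{2c}$ are rationally indifferent fixed points of $St_T$, and $\infty$ is a superattracting fixed point of $St_T$.
   Context: For a non-constant rational function $f$, Stirling's iterative root-finding method is $St_f(z)=z-\dfrac{f(z)}{f'\big(z-f(z)\big)}$, regarded as a rational self-map of $\widehat{\mathbb{C}}$. An extraneous fixed point of $St_f$ is a fixed point which is not a zero of $f$. Superattracting means multiplier $0$; rationally indifferent means multiplier $e^{2\pi i\theta}$ with $\theta\in\mathbb{Q}$; the multiplier at $\infty$ of a rational map $F$ is $G'(0)$ with $G(z)=1/F(1/z)$. *)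

theory Defs
  imports "HOL-Complex_Analysis.Complex_Analysis"
begin

text \<open>As a rational self-map of the Riemann sphere, its
  removable singularities are filled in (remove_sings); at finite points this is
  exactly the rational map.\<close>

definition stirling_raw :: "(complex \<Rightarrow> complex) \<Rightarrow> complex \<Rightarrow> complex" where
  "stirling_raw f z = z - f z / deriv f (z - f z)"

definition stirling :: "(complex \<Rightarrow> complex) \<Rightarrow> complex \<Rightarrow> complex" where
  "stirling f = remove_sings (stirling_raw f)"

text \<open>Conjugate of a map F by w = 1/z: G(w) = 1/F(1/w), with the removable
  singularity at 0 filled in. The point infinity corresponds to w = 0.\<close>

definition conj_inf :: "(complex \<Rightarrow> complex) \<Rightarrow> complex \<Rightarrow> complex" where
  "conj_inf F = remove_sings (\<lambda>w. inverse (F (inverse w)))"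

definition fixed_point :: "(complex \<Rightarrow> complex) \<Rightarrow> complex \<Rightarrow> bool" where
  "fixed_point F z \<longleftrightarrow> F analytic_on {z} \<and> F z = z"

definition multiplier :: "(complex \<Rightarrow> complex) \<Rightarrow> complex \<Rightarrow> complex" where
  "multiplier F z = deriv F z"

definition superattracting_fixed_point :: "(complex \<Rightarrow> complex) \<Rightarrow> complex \<Rightarrow> bool" where
  "superattracting_fixed_point F z \<longleftrightarrow> fixed_point F z \<and> multiplier F z = 0"

definition rationally_indifferent_fixed_point :: "(complex \<Rightarrow> complex) \<Rightarrow> complex \<Rightarrow> bool" where
  "rationally_indifferent_fixed_point F z \<longleftrightarrow> fixed_point F z \<and>
     (\<exists>\<theta>::real. \<theta> \<in> \<rat> \<and> multiplier F z = exp (2 * of_real pi * \<i> * of_real \<theta>))"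

definition fixed_point_inf :: "(complex \<Rightarrow> complex) \<Rightarrow> bool" where
  "fixed_point_inf F \<longleftrightarrow> fixed_point (conj_inf F) 0"

definition multiplier_inf :: "(complex \<Rightarrow> complex) \<Rightarrow> complex" where
  "multiplier_inf F = multiplier (conj_inf F) 0"

definition superattracting_fixed_point_inf :: "(complex \<Rightarrow> complex) \<Rightarrow> bool" where
  "superattracting_fixed_point_inf F \<longleftrightarrow> fixed_point_inf F \<and> multiplier_inf F = 0"

end

theory Submission
  imports Defs
begin

text \<open>For a unimodular Moebius map T the derivative is 1/(cz+d)^2, so wherever the
  denominator U z = c(z - T z) + d of T at z - T z does not vanish, the Stirling map is the
  rational map R z = z - T z * (U z)^2.  Its derivative is 1 - T' U^2 - 2 c T U (1 - T').
  At the zero -b/a of T this is 1 - a^2 (1/a)^2 = 0.  The extraneous fixed points are the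
  zeros of U, i.e. of (cz+d)^2 - c(az+b), and there the derivative is 1 = exp 0.  In the
  coordinate w = 1/z the map becomes w^2 (c+dw)^3 / D w with D 0 = -a c^4 \<noteq> 0, which has a
  double zero at w = 0.\<close>

lemma remove_sings_holomorphic_extension:
  assumes S: "open S" and g: "g holomorphic_on S"
    and ev: "\<And>z. z \<in> S \<Longrightarrow> eventually (\<lambda>w. f w = g w) (at z)"
    and z: "z \<in> S"
  shows "remove_sings f z = g z" "remove_sings f analytic_on {z}"
        "deriv (remove_sings f) z = deriv g z"
proof -
  have eq: "remove_sings f x = g x" if x: "x \<in> S" for x
  proof (rule remove_sings_eqI)
    have "isCont g x"
      using holomorphic_on_imp_continuous_on[OF g] continuous_on_eq_continuous_at[OF S] x by blast
    hence "g \<midarrow>x\<rightarrow> g x" by (rule isContD)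
    moreover have "eventually (\<lambda>w. g w = f w) (at x)" using ev[OF x] by (simp add: eq_commute)
    ultimately show "f \<midarrow>x\<rightarrow> g x" using Lim_transform_eventually by blast
  qed
  show "remove_sings f z = g z" using eq z .
  have "remove_sings f holomorphic_on S" by (rule holomorphic_transform[OF g]) (simp add: eq)
  thus "remove_sings f analytic_on {z}" using S z analytic_on_open analytic_on_subset by blast
  have "eventually (\<lambda>x. x \<in> S) (nhds z)" using S z eventually_nhds_in_open by blast
  hence "eventually (\<lambda>x. remove_sings f x = g x) (nhds z)" by eventually_elim (rule eq)
  thus "deriv (remove_sings f) z = deriv g z" by (rule deriv_cong_ev) simp
qed

locale unimodular_mobius =
  fixes a b c d :: complex
  assumes c_nonzero: "c \<noteq> 0" and det: "a * d - b * c = 1"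
begin

definition mob :: "complex \<Rightarrow> complex" where
  "mob z = (a * z + b) / (c * z + d)"

definition step_denom :: "complex \<Rightarrow> complex" where
  "step_denom z = c * (z - mob z) + d"

definition stirling_rat :: "complex \<Rightarrow> complex" where
  "stirling_rat z = z - mob z * step_denom z ^ 2"

definition extraneous_poly :: "complex \<Rightarrow> complex" where
  "extraneous_poly z = (c * z + d)^2 - c * (a * z + b)"

definition mob_domain :: "complex set" where
  "mob_domain = {z. c * z + d \<noteq> 0}"

lemma open_mob_domain: "open mob_domain"
  unfolding mob_domain_def by (intro open_Collect_neq continuous_intros)

lemma mob_has_field_derivative:
  assumes "c * z + d \<noteq> 0"
  shows "(mob has_field_derivative 1 / (c * z + d)^2) (at z)"
proof -
  have "(mob has_field_derivative (a * (c*z+d) - (a*z+b) * c) / (c*z+d)^2) (at z)"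
    unfolding mob_def fun_eq_iff using assms
    by (auto intro!: derivative_eq_intros simp: power2_eq_square)
  moreover have "a * (c*z+d) - (a*z+b) * c = 1" using det by (simp add: algebra_simps)
  ultimately show ?thesis by simp
qed

lemma stirling_rat_has_field_derivative:
  assumes cz: "c * z + d \<noteq> 0"
  defines "T' \<equiv> 1 / (c * z + d)^2"
  shows "(stirling_rat has_field_derivative
           1 - T' * step_denom z ^ 2 - 2 * c * mob z * step_denom z * (1 - T')) (at z)"
proof -
  have dU: "(step_denom has_field_derivative c * (1 - T')) (at z)"
    unfolding step_denom_def fun_eq_iff T'_def using mob_has_field_derivative[OF cz]
    by (auto intro!: derivative_eq_intros)
  show ?thesis
    unfolding stirling_rat_def fun_eq_iff
    by (rule DERIV_cong[OF DERIV_diff[OF DERIV_ident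
          DERIV_mult[OF mob_has_field_derivative[OF cz] DERIV_power[OF dU]]]])
       (simp add: T'_def algebra_simps power2_eq_square)
qed

lemma stirling_rat_holomorphic: "stirling_rat holomorphic_on mob_domain"
  using stirling_rat_has_field_derivative open_mob_domain
  by (subst holomorphic_on_open) (auto simp: mob_domain_def)

lemma step_denom_mult:
  assumes "c * z + d \<noteq> 0"
  shows "step_denom z * (c * z + d) = extraneous_poly z"
  unfolding step_denom_def mob_def extraneous_poly_def using assms
  by (simp add: field_simps power2_eq_square)

lemma extraneous_poly_factor:
  assumes "s^2 = a^2 - 4"
  shows "extraneous_poly z = c^2 * (z - ((a - 2*d) + s)/(2*c)) * (z - ((a - 2*d) - s)/(2*c))"
proof -
  have "c^2 * (z - ((a - 2*d) + s)/(2*c)) * (z - ((a - 2*d) - s)/(2*c))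
        = c^2*z^2 - c*(a-2*d)*z + ((a-2*d)^2 - s^2)/4"
    using c_nonzero by (simp add: field_simps power2_eq_square)
  also have "\<dots> = extraneous_poly z"
    unfolding assms extraneous_poly_def using det by (simp add: field_simps power2_eq_square)
  finally show ?thesis by simp
qed

lemma stirling_raw_eq_stirling_rat:
  assumes "c * z + d \<noteq> 0" and "extraneous_poly z \<noteq> 0"
  shows "stirling_raw mob z = stirling_rat z"
proof -
  have U: "step_denom z \<noteq> 0" using step_denom_mult[OF assms(1)] assms(2) by auto
  hence "deriv mob (z - mob z) = 1 / step_denom z ^ 2"
    using DERIV_imp_deriv[OF mob_has_field_derivative] unfolding step_denom_def by simp
  thus ?thesis unfolding stirling_raw_def stirling_rat_def using U by simp
qed

lemma eventually_stirling_raw_eq: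
  assumes "z \<in> mob_domain"
  shows "eventually (\<lambda>w. stirling_raw mob w = stirling_rat w) (at z)"
proof -
  define s where "s = csqrt (a^2 - 4)"
  have roots: "extraneous_poly w \<noteq> 0"
    if "w \<noteq> ((a - 2*d) + s)/(2*c)" "w \<noteq> ((a - 2*d) - s)/(2*c)" for w
    using extraneous_poly_factor[of s w] that c_nonzero by (simp add: s_def)
  have "eventually (\<lambda>w. w \<in> mob_domain) (at z)"
    using eventually_at_in_open'[OF open_mob_domain assms] .
  moreover have "eventually (\<lambda>w. w \<noteq> ((a - 2*d) + s)/(2*c)) (at z)"
    by (rule eventually_neq_at_within)
  moreover have "eventually (\<lambda>w. w \<noteq> ((a - 2*d) - s)/(2*c)) (at z)"
    by (rule eventually_neq_at_within)
  ultimately show ?thesis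
    by eventually_elim (use roots stirling_raw_eq_stirling_rat in \<open>auto simp: mob_domain_def\<close>)
qed

lemma stirling_mob_local:
  assumes "z \<in> mob_domain"
  shows "stirling mob z = stirling_rat z" "stirling mob analytic_on {z}"
        "deriv (stirling mob) z = deriv stirling_rat z"
  unfolding stirling_def
  using remove_sings_holomorphic_extension[OF open_mob_domain stirling_rat_holomorphic
          eventually_stirling_raw_eq assms] by blast+

lemma stirling_mob_fixed_point:
  assumes "c * z + d \<noteq> 0" and "stirling_rat z = z"
  shows "fixed_point (stirling mob) z" "multiplier (stirling mob) z = deriv stirling_rat z"
  using stirling_mob_local[of z] assms
  unfolding fixed_point_def multiplier_def mob_domain_def by simp_all

lemma superattracting_zero:
  assumes "a \<noteq> 0"
  shows "superattracting_fixed_point (stirling mob) (- b / a)"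
proof -
  define z where "z = - b / a"
  have cz: "c * z + d = 1 / a" unfolding z_def using assms det by (simp add: field_simps)
  have Tz: "mob z = 0" unfolding mob_def z_def using assms by simp
  have Uz: "step_denom z = 1 / a" unfolding step_denom_def using Tz cz by simp
  have fixed: "stirling_rat z = z" unfolding stirling_rat_def using Tz by simp
  have czn: "c * z + d \<noteq> 0" using cz assms by simp
  have "deriv stirling_rat z = 0"
    using DERIV_imp_deriv[OF stirling_rat_has_field_derivative[OF czn]] cz Tz Uz assms
    by (simp add: power_one_over power2_eq_square)
  thus ?thesis
    using stirling_mob_fixed_point[OF czn fixed]
    unfolding superattracting_fixed_point_def z_def[symmetric] by simp
qed

lemma rationally_indifferent_extraneous:
  assumes hs: "s^2 = a^2 - 4" and hz: "z = ((a - 2 * d) + s) / (2 * c)"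
  shows "mob z \<noteq> 0" "rationally_indifferent_fixed_point (stirling mob) z"
proof -
  have cz: "c * z + d = (a + s) / 2" unfolding hz using c_nonzero by (simp add: field_simps)
  have "a + s \<noteq> 0"
  proof
    assume "a + s = 0"
    hence "s = - a" by (simp add: add_eq_0_iff)
    with hs show False by simp
  qed
  hence czn: "c * z + d \<noteq> 0" unfolding cz by simp
  have "extraneous_poly z = 0" using extraneous_poly_factor[OF hs, of z] hz by simp
  hence Uz: "step_denom z = 0" using step_denom_mult[OF czn] czn by simp
  show "mob z \<noteq> 0"
  proof
    assume "mob z = 0"
    hence "step_denom z = c * z + d" unfolding step_denom_def by simp
    with Uz czn show False by simp
  qed
  have fixed: "stirling_rat z = z" unfolding stirling_rat_def using Uz by simp
  have "deriv stirling_rat z = exp (2 * of_real pi * \<i> * of_real 0)"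
    using DERIV_imp_deriv[OF stirling_rat_has_field_derivative[OF czn]] Uz by simp
  thus "rationally_indifferent_fixed_point (stirling mob) z"
    using stirling_mob_fixed_point[OF czn fixed]
    unfolding rationally_indifferent_fixed_point_def by (metis Rats_0)
qed

definition conj_denom :: "complex \<Rightarrow> complex" where
  "conj_denom w = w * (c + d*w)^3 - (a + b*w) * ((c + d*w)^2 - c*w*(a + b*w))^2"

lemma stirling_rat_inverse:
  assumes cw: "c + d * w \<noteq> 0" and w: "w \<noteq> 0"
  shows "stirling_rat (inverse w) = conj_denom w / (w^2 * (c + d*w)^3)"
proof -
  define P Q E where "P = a + b*w" and "Q = c + d*w" and "E = Q^2 - c*w*P"
  have Q: "Q \<noteq> 0" using cw by (simp add: Q_def)
  have "a * inverse w + b = P / w" "c * inverse w + d = Q / w"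
    using w by (simp_all add: P_def Q_def field_simps)
  hence T: "mob (inverse w) = P / Q"
    unfolding mob_def using w Q by simp
  have U: "step_denom (inverse w) = E / (w * Q)"
    unfolding step_denom_def T E_def using w Q
    by (simp add: field_simps power2_eq_square) (simp add: Q_def algebra_simps)
  have "stirling_rat (inverse w) = (w * Q^3 - P * E^2) / (w^2 * Q^3)"
    unfolding stirling_rat_def T U using w Q
    by (simp add: field_simps power2_eq_square power3_eq_cube)
  thus ?thesis unfolding conj_denom_def P_def Q_def E_def .
qed

lemma superattracting_infinity:
  assumes "a \<noteq> 0"
  shows "superattracting_fixed_point_inf (stirling mob)"
proof -
  define H where "H = (\<lambda>w. w^2 * (c + d*w)^3 / conj_denom w)"
  define S where "S = {w. c + d*w \<noteq> 0} \<inter> {w. conj_denom w \<noteq> 0}"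
  have D0: "conj_denom 0 = - a * c^4"
    unfolding conj_denom_def by (simp add: power2_eq_square eval_nat_numeral)
  have openS: "open S" unfolding S_def conj_denom_def
    by (intro open_Int open_Collect_neq continuous_intros)
  have S0: "0 \<in> S" unfolding S_def using D0 assms c_nonzero by simp
  have holH: "H holomorphic_on S" unfolding H_def S_def conj_denom_def
    by (intro holomorphic_intros) auto
  have H: "inverse (stirling mob (inverse w)) = H w" if "w \<in> S" "w \<noteq> 0" for w
  proof -
    have cw: "c + d*w \<noteq> 0" "conj_denom w \<noteq> 0" using that(1) unfolding S_def by auto
    have "inverse w \<in> mob_domain"
      unfolding mob_domain_def using cw(1) that(2) by (simp add: field_simps)
    thus ?thesis
      using stirling_mob_local(1) stirling_rat_inverse[OF cw(1) that(2)] cw that(2)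
      unfolding H_def by simp
  qed
  have ev: "eventually (\<lambda>w. inverse (stirling mob (inverse w)) = H w) (at z)" if "z \<in> S" for z
  proof -
    have "eventually (\<lambda>w. w \<in> S) (at z)" using eventually_at_in_open'[OF openS that] .
    moreover have "eventually (\<lambda>w. w \<noteq> 0) (at z)" by (rule eventually_neq_at_within)
    ultimately show ?thesis by eventually_elim (use H in auto)
  qed
  have "(H has_field_derivative 0) (at 0)"
    unfolding H_def using D0 assms c_nonzero
    by (auto intro!: derivative_eq_intros simp: conj_denom_def)
  hence "deriv H 0 = 0" by (rule DERIV_imp_deriv)
  thus ?thesis
    using remove_sings_holomorphic_extension[OF openS holH ev S0]
    unfolding superattracting_fixed_point_inf_def fixed_point_inf_def multiplier_inf_def
      fixed_point_def multiplier_def conj_inf_def H_def by simp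
qed

end

theorem mainTheorem13:
  fixes a b c d :: complex
  assumes "a \<noteq> 0" and "c \<noteq> 0" and "a * d - b * c = 1"
  defines "T \<equiv> (\<lambda>z. (a * z + b) / (c * z + d))"
  shows "superattracting_fixed_point (stirling T) (- b / a) \<and>
         (\<forall>s z. s\<^sup>2 = a\<^sup>2 - 4 \<and> z = ((a - 2 * d) + s) / (2 * c) \<longrightarrow>
            T z \<noteq> 0 \<and> rationally_indifferent_fixed_point (stirling T) z) \<and>
         superattracting_fixed_point_inf (stirling T)"
proof -
  interpret unimodular_mobius a b c d
    using assms(2,3) by unfold_locales
  have "T = mob" unfolding T_def mob_def by (rule refl)
  thus ?thesis
    using superattracting_zero[OF assms(1)] rationally_indifferent_extraneous
      superattracting_infinity[OF assms(1)] by blast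
qed

end
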